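(* Fix $\epsilon_2>0$ and $(u_\pm,v_\pm)$ with $v_\pm>0$ and $u_->u_++2\epsilon_2$, and for small $\epsilon_1>0$ let $v_*^{\epsilon_2}$, $\sigma_1^{\epsilon_2},\sigma_2^{\epsilon_2}$ be the intermediate density and shock speeds of the two-shock Riemann solution. Then $$\lim_{\epsilon_1\to0}\int_{\sigma_1^{\epsilon_2}}^{\sigma_2^{\epsilon_2}}v_*^{\epsilon_2}\,d\xi=\tfrac12\big(v_+(u_--u_++2\epsilon_2)-v_-(u_+-u_-+2\epsilon_2)\big).$$
   Context: Perturbed Brio system: $u_t+(\tfrac12u^2+\tfrac12\epsilon_1v^2)_x=0$, $v_t+(uv-\epsilon_2v)_x=0$, $\epsilon_1,\epsilon_2>0$, $v>0$. The two-shock intermediate state $(u_*,v_* )$ satisfies $v_*>\max(v_-,v_+)$, $u_+<u_*<u_-$, $$u_*=u_-+(v_*-v_-)\frac{\epsilon_2-\sqrt{\epsilon_2^2+4\epsilon_1(v_*+v_-)^2}}{v_*+v_-},\qquad u_+=u_*+(v_+-v_* )\frac{\epsilon_2+\sqrt{\epsilon_2^2+4\epsilon_1(v_*+v_+)^2}}{v_*+v_+},$$ with shock speeds $\sigma_1=u_-+\frac{v_*(u_*-u_-)}{v_*-v_-}-\epsilon_2$, $\sigma_2=u_++\frac{v_*(u_+-u_* )}{v_+-v_*}-\epsilon_2$. *)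

theory Defs
  imports "HOL-Analysis.Analysis"
begin

text \<open>Two-shock intermediate state (u_*, v_*) of the perturbed Brio system with
parameters e1 = epsilon_1, e2 = epsilon_2 and Riemann data (um,vm) = (u_-,v_-),
(up,vp) = (u_+,v_+).\<close>
definition two_shock_state ::
  "real \<Rightarrow> real \<Rightarrow> real \<Rightarrow> real \<Rightarrow> real \<Rightarrow> real \<Rightarrow> real \<Rightarrow> real \<Rightarrow> bool" where
  "two_shock_state e1 e2 um vm up vp us vs \<longleftrightarrow>
     vs > max vm vp \<and> up < us \<and> us < um \<and>
     us = um + (vs - vm) * (e2 - sqrt (e2^2 + 4 * e1 * (vs + vm)^2)) / (vs + vm) \<and>
     up = us + (vp - vs) * (e2 + sqrt (e2^2 + 4 * e1 * (vs + vp)^2)) / (vs + vp)"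

definition shock_speed1 :: "real \<Rightarrow> real \<Rightarrow> real \<Rightarrow> real \<Rightarrow> real \<Rightarrow> real" where
  "shock_speed1 e2 um vm us vs = um + vs * (us - um) / (vs - vm) - e2"

definition shock_speed2 :: "real \<Rightarrow> real \<Rightarrow> real \<Rightarrow> real \<Rightarrow> real \<Rightarrow> real" where
  "shock_speed2 e2 up vp us vs = up + vs * (up - us) / (vp - vs) - e2"

end

theory Submission
  imports Defs
begin

text \<open>
  Along the two Hugoniot curves \<open>u\<^sub>- - u\<^sub>* = (v\<^sub>* - v\<^sub>-) k\<^sub>1\<close> and
  \<open>u\<^sub>* - u\<^sub>+ = (v\<^sub>* - v\<^sub>+) k\<^sub>2\<close>, with slopes \<open>k\<^sub>1, k\<^sub>2\<close> depending only on \<open>v\<^sub>*\<close>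
  (shock1_slope, shock2_slope). So \<open>v\<^sub>*\<close> is a root of
  \<open>(v - v\<^sub>-) k\<^sub>1 + (v - v\<^sub>+) k\<^sub>2 = u\<^sub>- - u\<^sub>+\<close> (velocity_drop), and
  \<open>\<sigma>\<^sub>2 - \<sigma>\<^sub>1 = v\<^sub>- k\<^sub>1 + v\<^sub>+ k\<^sub>2\<close>, so the integral equals \<open>v\<^sub>- a + v\<^sub>+ b\<close> with
  \<open>a = v\<^sub>* k\<^sub>1\<close>, \<open>b = v\<^sub>* k\<^sub>2\<close>.
  As \<open>\<epsilon>\<^sub>1 \<rightarrow> 0\<close> the left-hand side of the root equation is at most \<open>2\<epsilon>\<^sub>2 + O(\<surd>\<epsilon>\<^sub>1)\<close>
  uniformly on bounded ranges of \<open>v\<close>, while \<open>2\<epsilon>\<^sub>2 < u\<^sub>- - u\<^sub>+\<close>: a root exists by the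
  intermediate value theorem and every root tends to infinity. For large \<open>v\<^sub>*\<close> the root
  equation gives \<open>a + b = u\<^sub>- - u\<^sub>+ + O(1/v\<^sub>*)\<close>, and \<open>b - a = 2\<epsilon>\<^sub>2 + O(1/v\<^sub>*)\<close> holds
  uniformly in \<open>\<epsilon>\<^sub>1\<close>; together they pin down the limit.
\<close>

definition shock1_slope :: "real \<Rightarrow> real \<Rightarrow> real \<Rightarrow> real \<Rightarrow> real" where
  "shock1_slope e1 e2 vm v = (sqrt (e2^2 + 4*e1*(v + vm)^2) - e2) / (v + vm)"

definition shock2_slope :: "real \<Rightarrow> real \<Rightarrow> real \<Rightarrow> real \<Rightarrow> real" where
  "shock2_slope e1 e2 vp v = (e2 + sqrt (e2^2 + 4*e1*(v + vp)^2)) / (v + vp)"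

definition velocity_drop :: "real \<Rightarrow> real \<Rightarrow> real \<Rightarrow> real \<Rightarrow> real \<Rightarrow> real" where
  "velocity_drop e1 e2 vm vp v = (v - vm) * shock1_slope e1 e2 vm v + (v - vp) * shock2_slope e1 e2 vp v"

lemma sqrt_square_add_ge:
  fixes e c a :: real
  assumes "e \<ge> 0" "c \<ge> 0"
  shows "e \<le> sqrt (e^2 + c*a^2)"
  using assms by (simp add: real_le_rsqrt)

lemma sqrt_square_add_le:
  fixes e c a :: real
  assumes "e \<ge> 0" "c \<ge> 0" "a \<ge> 0"
  shows "sqrt (e^2 + c*a^2) \<le> e + sqrt c * a"
  using sqrt_add_le_add_sqrt[of "e^2" "c*a^2"] assms by (simp add: real_sqrt_mult)

lemma abs_sqrt_cross_diff_le:
  fixes a b c e :: real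
  assumes "a > 0" "b > 0" "c \<ge> 0" "e > 0"
  shows "\<bar>sqrt (e^2 + c*b^2) * a - sqrt (e^2 + c*a^2) * b\<bar> \<le> e * \<bar>a - b\<bar>"
proof -
  define s where "s = sqrt (e^2 + c*a^2)"
  define t where "t = sqrt (e^2 + c*b^2)"
  have "e \<le> s" "e \<le> t"
    unfolding s_def t_def using assms by (auto intro: sqrt_square_add_ge)
  then have sum_ge: "e * (a + b) \<le> t*a + s*b"
    using assms by (simp add: distrib_left add_mono mult_right_mono mult.commute)
  have "(t*a - s*b) * (t*a + s*b) = t^2*a^2 - s^2*b^2"
    by (simp add: power2_eq_square algebra_simps)
  also have "\<dots> = e^2 * (a - b) * (a + b)"
    using assms by (simp add: s_def t_def power2_eq_square algebra_simps)
  finally have product: "(t*a - s*b) * (t*a + s*b) = e^2 * (a - b) * (a + b)" .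
  have "0 \<le> t*a + s*b"
    using sum_ge assms by (smt (verit) mult_pos_pos)
  then have "\<bar>t*a - s*b\<bar> * (t*a + s*b) = \<bar>(t*a - s*b) * (t*a + s*b)\<bar>"
    by (simp add: abs_mult)
  also have "\<dots> = e^2 * \<bar>a - b\<bar> * (a + b)"
    unfolding product using assms by (simp add: abs_mult)
  finally have "\<bar>t*a - s*b\<bar> * (t*a + s*b) = (e * \<bar>a - b\<bar>) * (e * (a + b))"
    by (simp add: power2_eq_square)
  moreover have "\<bar>t*a - s*b\<bar> * (e * (a + b)) \<le> \<bar>t*a - s*b\<bar> * (t*a + s*b)"
    using sum_ge by (simp add: mult_left_mono)
  ultimately have "\<bar>t*a - s*b\<bar> * (e * (a + b)) \<le> (e * \<bar>a - b\<bar>) * (e * (a + b))"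
    by simp
  then show ?thesis
    unfolding s_def t_def using assms by (simp add: mult.commute)
qed

lemma shock1_slope_bounds:
  fixes e1 e2 vm v :: real
  assumes "e1 > 0" "e2 \<ge> 0" "v + vm > 0"
  shows "0 < shock1_slope e1 e2 vm v" "shock1_slope e1 e2 vm v \<le> 2 * sqrt e1"
proof -
  have "e2^2 < e2^2 + 4*e1*(v + vm)^2"
    using assms by simp
  then have "sqrt (e2^2) < sqrt (e2^2 + 4*e1*(v + vm)^2)"
    by (rule real_sqrt_less_mono)
  then show "0 < shock1_slope e1 e2 vm v"
    unfolding shock1_slope_def using assms by simp
  have "sqrt (e2^2 + 4*e1*(v + vm)^2) - e2 \<le> 2 * sqrt e1 * (v + vm)"
    using sqrt_square_add_le[of e2 "4*e1" "v + vm"] assms by (simp add: real_sqrt_mult)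
  then show "shock1_slope e1 e2 vm v \<le> 2 * sqrt e1"
    unfolding shock1_slope_def using assms by (simp add: divide_le_eq)
qed

lemma shock2_slope_bounds:
  fixes e1 e2 vp v :: real
  assumes "e1 \<ge> 0" "e2 > 0" "v + vp > 0"
  shows "2 * sqrt e1 < shock2_slope e1 e2 vp v"
    "shock2_slope e1 e2 vp v \<le> 2 * e2 / (v + vp) + 2 * sqrt e1"
proof -
  have "sqrt (4*e1*(v + vp)^2) \<le> sqrt (e2^2 + 4*e1*(v + vp)^2)"
    by (rule real_sqrt_le_mono) simp
  then have "2 * sqrt e1 * (v + vp) < e2 + sqrt (e2^2 + 4*e1*(v + vp)^2)"
    using assms by (simp add: real_sqrt_mult)
  then show "2 * sqrt e1 < shock2_slope e1 e2 vp v"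
    unfolding shock2_slope_def using assms by (simp add: less_divide_eq)
  have "e2 + sqrt (e2^2 + 4*e1*(v + vp)^2) \<le> 2 * e2 + 2 * sqrt e1 * (v + vp)"
    using sqrt_square_add_le[of e2 "4*e1" "v + vp"] assms by (simp add: real_sqrt_mult)
  then have "shock2_slope e1 e2 vp v \<le> (2 * e2 + 2 * sqrt e1 * (v + vp)) / (v + vp)"
    unfolding shock2_slope_def using assms by (simp add: divide_right_mono)
  also have "\<dots> = 2 * e2 / (v + vp) + 2 * sqrt e1"
    using assms by (simp add: add_divide_distrib)
  finally show "shock2_slope e1 e2 vp v \<le> 2 * e2 / (v + vp) + 2 * sqrt e1" .
qed

lemma velocity_drop_le:
  fixes e1 e2 vm vp v :: real
  assumes "e1 > 0" "e2 > 0" "vm > 0" "vp > 0" "max vm vp \<le> v"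
  shows "velocity_drop e1 e2 vm vp v \<le> 2 * e2 + 4 * sqrt e1 * v"
proof -
  note k1 = shock1_slope_bounds[of e1 e2 v vm] and k2 = shock2_slope_bounds[of e1 e2 v vp]
  have "(v - vm) * shock1_slope e1 e2 vm v \<le> (v - vm) * (2 * sqrt e1)"
    using k1 assms by (intro mult_left_mono) auto
  also have "\<dots> \<le> 2 * sqrt e1 * v"
    using assms by (simp add: algebra_simps)
  finally have left: "(v - vm) * shock1_slope e1 e2 vm v \<le> 2 * sqrt e1 * v" .
  have "(v - vp) * shock2_slope e1 e2 vp v \<le> (v - vp) * (2 * e2 / (v + vp) + 2 * sqrt e1)"
    using k2 assms by (intro mult_left_mono) auto
  also have "\<dots> = 2 * e2 * ((v - vp) / (v + vp)) + 2 * sqrt e1 * (v - vp)"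
    by (simp add: algebra_simps)
  also have "\<dots> \<le> 2 * e2 * 1 + 2 * sqrt e1 * v"
    using assms by (intro add_mono mult_left_mono) auto
  finally show ?thesis
    using left unfolding velocity_drop_def by linarith
qed

lemma velocity_drop_ge:
  fixes e1 e2 vm vp v :: real
  assumes "e1 > 0" "e2 > 0" "vm > 0" "vp > 0" "max vm vp \<le> v"
  shows "2 * sqrt e1 * (v - vp) \<le> velocity_drop e1 e2 vm vp v"
proof -
  have "0 \<le> (v - vm) * shock1_slope e1 e2 vm v"
    using shock1_slope_bounds[of e1 e2 v vm] assms by simp
  moreover have "2 * sqrt e1 * (v - vp) \<le> (v - vp) * shock2_slope e1 e2 vp v"
    using shock2_slope_bounds[of e1 e2 v vp] assms by (simp add: mult_left_mono mult.commute)
  ultimately show ?thesis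
    unfolding velocity_drop_def by linarith
qed

lemma continuous_on_velocity_drop:
  fixes e1 e2 vm vp :: real
  assumes "vm > 0" "vp > 0"
  shows "continuous_on {0..} (velocity_drop e1 e2 vm vp)"
  unfolding velocity_drop_def shock1_slope_def shock2_slope_def
  using assms by (intro continuous_intros) (auto simp: add_pos_nonneg)

lemma velocity_drop_attains:
  fixes e1 e2 vm vp D :: real
  assumes "e1 > 0" "e2 > 0" "vm > 0" "vp > 0"
    and below: "velocity_drop e1 e2 vm vp (max vm vp) < D"
  shows "\<exists>v > max vm vp. velocity_drop e1 e2 vm vp v = D"
proof -
  define v0 where "v0 = max vm vp"
  have "0 \<le> velocity_drop e1 e2 vm vp v0"
    using velocity_drop_ge[of e1 e2 vm vp v0] assms unfolding v0_def
    by (smt (verit) mult_nonneg_nonneg real_sqrt_ge_zero)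
  with below have "D > 0"
    unfolding v0_def by linarith
  define V where "V = v0 + D / (2 * sqrt e1)"
  have "v0 \<le> V"
    unfolding V_def using \<open>D > 0\<close> assms by simp
  have "D = 2 * sqrt e1 * (V - v0)"
    unfolding V_def using assms by simp
  also have "\<dots> \<le> 2 * sqrt e1 * (V - vp)"
    unfolding v0_def using assms by (intro mult_left_mono) auto
  also have "\<dots> \<le> velocity_drop e1 e2 vm vp V"
    using velocity_drop_ge[of e1 e2 vm vp V] assms \<open>v0 \<le> V\<close> unfolding v0_def by simp
  finally have above: "D \<le> velocity_drop e1 e2 vm vp V" .
  have "continuous_on {v0..V} (velocity_drop e1 e2 vm vp)"
    using assms unfolding v0_def
    by (intro continuous_on_subset[OF continuous_on_velocity_drop]) auto
  then obtain v where "v0 \<le> v" "velocity_drop e1 e2 vm vp v = D"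
    using IVT'[of "velocity_drop e1 e2 vm vp" v0 D V] below above \<open>v0 \<le> V\<close>
    unfolding v0_def by auto
  moreover have "v \<noteq> v0"
    using below calculation unfolding v0_def by auto
  ultimately show ?thesis
    unfolding v0_def by force
qed

lemma two_shock_state_iff:
  fixes e1 e2 um vm up vp us vs :: real
  assumes "e1 > 0" "e2 > 0" "vm > 0" "vp > 0"
  shows "two_shock_state e1 e2 um vm up vp us vs \<longleftrightarrow>
    max vm vp < vs \<and> us = um - (vs - vm) * shock1_slope e1 e2 vm vs
      \<and> up = us - (vs - vp) * shock2_slope e1 e2 vp vs"
proof -
  have "(vs - vm) * (e2 - sqrt (e2^2 + 4*e1*(vs + vm)^2)) / (vs + vm)
      = - ((vs - vm) * shock1_slope e1 e2 vm vs)"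
    unfolding shock1_slope_def
    by (metis minus_diff_eq mult_minus_right minus_divide_left times_divide_eq_right)
  moreover have "(vp - vs) * (e2 + sqrt (e2^2 + 4*e1*(vs + vp)^2)) / (vs + vp)
      = - ((vs - vp) * shock2_slope e1 e2 vp vs)"
    unfolding shock2_slope_def
    by (metis minus_diff_eq mult_minus_left minus_divide_left times_divide_eq_right)
  moreover have "0 < (vs - vm) * shock1_slope e1 e2 vm vs"
    and "0 < (vs - vp) * shock2_slope e1 e2 vp vs" if "max vm vp < vs"
    using that assms shock1_slope_bounds[of e1 e2 vs vm] shock2_slope_bounds[of e1 e2 vs vp]
    by (auto intro!: mult_pos_pos order.strict_trans1[OF real_sqrt_ge_zero])
  ultimately show ?thesis
    unfolding two_shock_state_def by auto
qed

lemma shock_speed_gap: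
  fixes e1 e2 um vm up vp us vs :: real
  assumes "e1 > 0" "e2 > 0" "vm > 0" "vp > 0"
    and "two_shock_state e1 e2 um vm up vp us vs"
  shows "shock_speed2 e2 up vp us vs - shock_speed1 e2 um vm us vs
    = vm * shock1_slope e1 e2 vm vs + vp * shock2_slope e1 e2 vp vs"
proof -
  have "max vm vp < vs" and us: "us = um - (vs - vm) * shock1_slope e1 e2 vm vs"
    and up: "up = us - (vs - vp) * shock2_slope e1 e2 vp vs"
    using assms two_shock_state_iff by auto
  have "us - um = (vs - vm) * - shock1_slope e1 e2 vm vs"
    and "up - us = (vp - vs) * shock2_slope e1 e2 vp vs"
    using us up by (simp_all add: algebra_simps)
  with \<open>max vm vp < vs\<close>
  have gap1: "vs * (us - um) / (vs - vm) = - vs * shock1_slope e1 e2 vm vs"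
    and gap2: "vs * (up - us) / (vp - vs) = vs * shock2_slope e1 e2 vp vs"
    by simp_all
  show ?thesis
    unfolding shock_speed1_def shock_speed2_def gap1 gap2 using us up by (simp add: algebra_simps)
qed

lemma two_shock_state_velocity_drop:
  fixes e1 e2 um vm up vp us vs :: real
  assumes "e1 > 0" "e2 > 0" "vm > 0" "vp > 0"
    and "two_shock_state e1 e2 um vm up vp us vs"
  shows "max vm vp < vs" "um - up = velocity_drop e1 e2 vm vp vs"
  using assms two_shock_state_iff[of e1 e2 vm vp] unfolding velocity_drop_def by auto

lemma scaled_slope_gap:
  fixes e1 e2 vm vp v :: real
  assumes "e1 \<ge> 0" "e2 > 0" "vm > 0" "vp > 0" "v > 0"
  shows "\<bar>v * shock2_slope e1 e2 vp v - v * shock1_slope e1 e2 vm v - 2 * e2\<bar>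
    \<le> 2 * e2 * (vm + vp) / v"
proof -
  define a where "a = v + vm"
  define b where "b = v + vp"
  define s1 where "s1 = sqrt (e2^2 + 4*e1*a^2)"
  define s2 where "s2 = sqrt (e2^2 + 4*e1*b^2)"
  have ab: "a > 0" "b > 0" "v \<le> a" "v \<le> b"
    unfolding a_def b_def using assms by auto
  have "v * shock2_slope e1 e2 vp v - v * shock1_slope e1 e2 vm v - 2 * e2
      = v * (e2 + s2) / b - v * (s1 - e2) / a - 2 * e2"
    unfolding shock1_slope_def shock2_slope_def s1_def s2_def a_def b_def by simp
  also have "\<dots> = v * (s2 * a - s1 * b) / (a * b) - e2 * (b - v) / b - e2 * (a - v) / a"
    using ab by (simp add: field_simps)
  also have "\<dots> = v * (s2 * a - s1 * b) / (a * b) - e2 * vp / b - e2 * vm / a"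
    unfolding a_def b_def by simp
  moreover have "\<bar>v * (s2 * a - s1 * b) / (a * b)\<bar> \<le> e2 * (vm + vp) / v"
  proof -
    have "\<bar>s2 * a - s1 * b\<bar> \<le> e2 * \<bar>a - b\<bar>"
      using abs_sqrt_cross_diff_le[of a b "4*e1" e2] ab assms unfolding s1_def s2_def by simp
    also have "\<dots> \<le> e2 * (vm + vp)"
      unfolding a_def b_def using assms by (intro mult_left_mono) auto
    finally have "\<bar>s2 * a - s1 * b\<bar> \<le> e2 * (vm + vp)" .
    then have "\<bar>v * (s2 * a - s1 * b) / (a * b)\<bar> \<le> v * (e2 * (vm + vp)) / (a * b)"
      using ab assms by (simp add: abs_mult divide_right_mono mult_left_mono)
    also have "\<dots> \<le> v * (e2 * (vm + vp)) / (v * v)"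
      using ab assms by (intro divide_left_mono mult_mono) auto
    finally show ?thesis
      using assms by simp
  qed
  moreover have "e2 * vp / b \<le> e2 * vp / v" "e2 * vm / a \<le> e2 * vm / v"
    using ab assms by (auto intro: divide_left_mono)
  moreover have "0 \<le> e2 * vp / b" "0 \<le> e2 * vm / a"
    using ab assms by auto
  moreover have "e2 * (vm + vp) / v + e2 * vp / v + e2 * vm / v = 2 * e2 * (vm + vp) / v"
    using assms by (simp add: field_simps)
  ultimately show ?thesis
    by linarith
qed

lemma weighted_sum_excess_bounds:
  fixes a b D v vm vp :: real
  assumes "vm > 0" "vp > 0" "a \<ge> 0" "b \<ge> 0" "2 * vm \<le> v" "2 * vp \<le> v"
    and drop: "v * D = (v - vm) * a + (v - vp) * b"
  shows "0 \<le> a + b - D" "a + b - D \<le> 2 * D * (vm + vp) / v"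
proof -
  have v: "v > 0"
    using assms by linarith
  have "v * a \<le> 2 * (v - vm) * a" "v * b \<le> 2 * (v - vp) * b"
    using assms by (simp_all add: mult_right_mono)
  moreover have "0 \<le> (v - vm) * a" "0 \<le> (v - vp) * b"
    using assms by simp_all
  ultimately have "v * a \<le> v * (2 * D)" "v * b \<le> v * (2 * D)"
    using drop by linarith+
  then have "vm * a + vp * b \<le> (vm + vp) * (2 * D)"
    using v assms by (simp add: distrib_right add_mono mult_left_mono)
  moreover have "a + b - D = (vm * a + vp * b) / v"
    using drop v by (simp add: field_simps)
  ultimately show "0 \<le> a + b - D" "a + b - D \<le> 2 * D * (vm + vp) / v"
    using v assms by (simp_all add: divide_right_mono mult.commute)
qed

lemma weighted_slopes_estimate:
  fixes a b D e v vm vp :: real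
  assumes "vm > 0" "vp > 0" "a \<ge> 0" "b \<ge> 0" "e \<ge> 0" "2 * vm \<le> v" "2 * vp \<le> v"
    and drop: "v * D = (v - vm) * a + (v - vp) * b"
    and gap: "\<bar>b - a - 2 * e\<bar> \<le> 2 * e * (vm + vp) / v"
  shows "\<bar>vm * a + vp * b - (vp * (D + 2 * e) + vm * (D - 2 * e)) / 2\<bar>
    \<le> (vm + vp)^2 * (D + e) / v"
proof -
  have v: "v > 0"
    using assms by linarith
  define E where "E = a + b - D"
  have E: "0 \<le> E" "E \<le> 2 * D * (vm + vp) / v"
    unfolding E_def using weighted_sum_excess_bounds[OF assms(1-4,6-8)] by simp_all
  define g where "g = b - a - 2 * e"
  have "\<bar>E + g\<bar> \<le> E + \<bar>g\<bar>" "\<bar>E - g\<bar> \<le> E + \<bar>g\<bar>"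
    unfolding abs_le_iff using E(1) abs_ge_self[of g] abs_ge_minus_self[of g] by linarith+
  then have "\<bar>vp * (E + g) + vm * (E - g)\<bar> \<le> vp * (E + \<bar>g\<bar>) + vm * (E + \<bar>g\<bar>)"
    using abs_triangle_ineq[of "vp * (E + g)" "vm * (E - g)"] assms
    by (simp add: abs_mult) (smt (verit) mult_left_mono)
  also have "\<dots> = (vm + vp) * (E + \<bar>g\<bar>)"
    by (simp add: algebra_simps)
  also have "\<dots> \<le> (vm + vp) * (2 * D * (vm + vp) / v + 2 * e * (vm + vp) / v)"
    using assms E gap unfolding g_def by (intro mult_left_mono add_mono) auto
  also have "\<dots> = (vm + vp)^2 * (D + e) / v * 2"
    using v by (simp add: power2_eq_square field_simps)
  finally have "\<bar>vp * (E + g) + vm * (E - g)\<bar> / 2 \<le> (vm + vp)^2 * (D + e) / v"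
    by (simp add: field_simps)
  moreover have "vm * a + vp * b - (vp * (D + 2 * e) + vm * (D - 2 * e)) / 2
      = (vp * (E + g) + vm * (E - g)) / 2"
    unfolding E_def g_def by (simp add: field_simps)
  ultimately show ?thesis
    by (metis abs_divide abs_numeral)
qed

lemma eventually_velocity_drop_less:
  fixes e2 vm vp D M :: real
  assumes "e2 > 0" "vm > 0" "vp > 0" "2 * e2 < D"
  shows "\<forall>\<^sub>F e1 in at_right 0. \<forall>v. max vm vp \<le> v \<and> v \<le> M \<longrightarrow> velocity_drop e1 e2 vm vp v < D"
proof -
  have "((\<lambda>e1. 2 * e2 + 4 * sqrt e1 * M) \<longlongrightarrow> 2 * e2 + 4 * sqrt 0 * M) (at_right 0)"
    by (intro tendsto_intros)
  then have "\<forall>\<^sub>F e1 in at_right 0. 2 * e2 + 4 * sqrt e1 * M < D"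
    using assms by (intro order_tendstoD(2)) auto
  moreover have "\<forall>\<^sub>F e1 in at_right (0::real). e1 > 0"
    by (rule eventually_at_right_less)
  ultimately show ?thesis
  proof eventually_elim
    case (elim e1)
    show ?case
    proof (intro allI impI)
      fix v assume v: "max vm vp \<le> v \<and> v \<le> M"
      have "velocity_drop e1 e2 vm vp v \<le> 2 * e2 + 4 * sqrt e1 * v"
        using velocity_drop_le[of e1 e2 vm vp v] elim assms v by simp
      also have "\<dots> \<le> 2 * e2 + 4 * sqrt e1 * M"
        using v elim by (intro add_left_mono mult_left_mono) auto
      finally show "velocity_drop e1 e2 vm vp v < D"
        using elim by linarith
    qed
  qed
qed

lemma eventually_two_shock_state_exists:
  fixes e2 um vm up vp :: real
  assumes "e2 > 0" "vm > 0" "vp > 0" "um > up + 2 * e2"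
  shows "\<forall>\<^sub>F e1 in at_right 0. \<exists>us vs. two_shock_state e1 e2 um vm up vp us vs"
proof -
  have "2 * e2 < um - up"
    using assms by simp
  from eventually_velocity_drop_less[OF assms(1-3) this, of "max vm vp"] eventually_at_right_less
  show ?thesis
  proof eventually_elim
    case (elim e1)
    with assms obtain vs where "max vm vp < vs" "velocity_drop e1 e2 vm vp vs = um - up"
      using velocity_drop_attains[of e1 e2 vm vp "um - up"] by auto
    then have "two_shock_state e1 e2 um vm up vp (um - (vs - vm) * shock1_slope e1 e2 vm vs) vs"
      using elim assms two_shock_state_iff[of e1 e2 vm vp] unfolding velocity_drop_def by auto
    then show ?case
      by blast
  qed
qed

lemma eventually_two_shock_density_gt:
  fixes e2 um vm up vp M :: real
  assumes "e2 > 0" "vm > 0" "vp > 0" "um > up + 2 * e2"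
  shows "\<forall>\<^sub>F e1 in at_right 0. \<forall>us vs. two_shock_state e1 e2 um vm up vp us vs \<longrightarrow> M < vs"
proof -
  have "2 * e2 < um - up"
    using assms by simp
  from eventually_velocity_drop_less[OF assms(1-3) this, of M] eventually_at_right_less
  show ?thesis
  proof eventually_elim
    case (elim e1)
    show ?case
    proof (intro allI impI)
      fix us vs assume "two_shock_state e1 e2 um vm up vp us vs"
      then have vs: "max vm vp < vs" "um - up = velocity_drop e1 e2 vm vp vs"
        using two_shock_state_velocity_drop[of e1 e2 vm vp] elim assms by auto
      show "M < vs"
      proof (rule ccontr)
        assume "\<not> M < vs"
        with vs have "max vm vp \<le> vs \<and> vs \<le> M"
          by simp
        then have "velocity_drop e1 e2 vm vp vs < um - up"
          using elim by blast
        with vs show False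
          by simp
      qed
    qed
  qed
qed

lemma two_shock_integral_estimate:
  fixes e1 e2 um vm up vp us vs :: real
  assumes "e1 > 0" "e2 > 0" "vm > 0" "vp > 0"
    and state: "two_shock_state e1 e2 um vm up vp us vs"
    and "2 * vm \<le> vs" "2 * vp \<le> vs"
  shows "\<bar>(LBINT \<xi>=ereal (shock_speed1 e2 um vm us vs)..ereal (shock_speed2 e2 up vp us vs). vs)
      - (1/2) * (vp * (um - up + 2 * e2) - vm * (up - um + 2 * e2))\<bar>
    \<le> (vm + vp)^2 * (um - up + e2) / vs"
proof -
  define a where "a = vs * shock1_slope e1 e2 vm vs"
  define b where "b = vs * shock2_slope e1 e2 vp vs"
  have "vs > 0"
    using assms by simp
  have "(LBINT \<xi>=ereal (shock_speed1 e2 um vm us vs)..ereal (shock_speed2 e2 up vp us vs). vs)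
      = vm * a + vp * b"
    using shock_speed_gap[OF assms(1-4) state] unfolding a_def b_def by (simp add: algebra_simps)
  moreover have "(1/2) * (vp * (um - up + 2 * e2) - vm * (up - um + 2 * e2))
      = (vp * ((um - up) + 2 * e2) + vm * ((um - up) - 2 * e2)) / 2"
    by (simp add: algebra_simps)
  moreover have "\<bar>vm * a + vp * b - (vp * ((um - up) + 2 * e2) + vm * ((um - up) - 2 * e2)) / 2\<bar>
      \<le> (vm + vp)^2 * ((um - up) + e2) / vs"
  proof (rule weighted_slopes_estimate)
    have root: "um - up = (vs - vm) * shock1_slope e1 e2 vm vs + (vs - vp) * shock2_slope e1 e2 vp vs"
      using two_shock_state_velocity_drop[OF assms(1-4) state] unfolding velocity_drop_def by simp
    show "vs * (um - up) = (vs - vm) * a + (vs - vp) * b"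
      unfolding a_def b_def root by (simp add: algebra_simps)
    show "\<bar>b - a - 2 * e2\<bar> \<le> 2 * e2 * (vm + vp) / vs"
      unfolding a_def b_def using scaled_slope_gap assms \<open>vs > 0\<close> by simp
    show "0 \<le> a" "0 \<le> b"
      unfolding a_def b_def using assms \<open>vs > 0\<close> shock1_slope_bounds[of e1 e2 vs vm]
        shock2_slope_bounds[of e1 e2 vs vp]
      by (auto intro!: mult_nonneg_nonneg order.strict_trans1[OF real_sqrt_ge_zero] less_imp_le)
  qed (use assms in auto)
  ultimately show ?thesis
    by (simp only:)
qed

lemma eventually_two_shock_integral_close:
  fixes e2 um vm up vp e :: real
  assumes "e2 > 0" "vm > 0" "vp > 0" "um > up + 2 * e2" and "e > 0"
  shows "\<forall>\<^sub>F e1 in at_right 0. \<forall>us vs. two_shock_state e1 e2 um vm up vp us vs \<longrightarrow>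
    \<bar>(LBINT \<xi>=ereal (shock_speed1 e2 um vm us vs)..ereal (shock_speed2 e2 up vp us vs). vs)
      - (1/2) * (vp * (um - up + 2 * e2) - vm * (up - um + 2 * e2))\<bar> < e"
proof -
  define K where "K = (vm + vp)^2 * (um - up + e2)"
  from eventually_two_shock_density_gt[OF assms(1-4), of "max (max (2 * vm) (2 * vp)) (K / e)"]
    eventually_at_right_less
  show ?thesis
  proof eventually_elim
    case (elim e1)
    show ?case
    proof (intro allI impI)
      fix us vs
      assume state: "two_shock_state e1 e2 um vm up vp us vs"
      with elim have "2 * vm < vs" "2 * vp < vs" "K / e < vs"
        by auto
      then have "K / vs < e"
        using assms by (simp add: divide_less_eq mult.commute)
      with state elim assms two_shock_integral_estimate[of e1 e2 vm vp um up us vs]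
      show "\<bar>(LBINT \<xi>=ereal (shock_speed1 e2 um vm us vs)..ereal (shock_speed2 e2 up vp us vs). vs)
          - (1/2) * (vp * (um - up + 2 * e2) - vm * (up - um + 2 * e2))\<bar> < e"
        unfolding K_def by fastforce
    qed
  qed
qed

theorem lemma6p4:
  fixes e2 um vm up vp :: real
  assumes "e2 > 0" and "vm > 0" and "vp > 0" and "um > up + 2 * e2"
  shows "(\<forall>\<^sub>F e1 in at_right 0. \<exists>us vs. two_shock_state e1 e2 um vm up vp us vs) \<and>
    (\<forall>e>0. \<forall>\<^sub>F e1 in at_right 0. \<forall>us vs. two_shock_state e1 e2 um vm up vp us vs \<longrightarrow>
       \<bar>(LBINT \<xi>=ereal (shock_speed1 e2 um vm us vs)..ereal (shock_speed2 e2 up vp us vs). vs)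
         - (1/2) * (vp * (um - up + 2 * e2) - vm * (up - um + 2 * e2))\<bar> < e)"
  using eventually_two_shock_state_exists[OF assms] eventually_two_shock_integral_close[OF assms]
  by blast

end
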